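(* Let $\psi:\mathcal{Q}\to\mathcal{P}$ be a full upper semilattice morphism with $\mathcal{P},\mathcal{Q}$ finite and $\uparrow\psi(\mathcal{Q})=\mathcal{P}$, and let $S\subseteq\mathcal{P}$ be a spread. If $\min S\subseteq\psi(\mathcal{Q})$ and $\operatorname{cover}S\subseteq\psi(\mathcal{Q})$, then $\mathbb{k}_S\cong\mathrm{Lan}_\psi(\mathbb{k}_{\lfloor S\rfloor_\psi})$ in $\operatorname{rep}\mathcal{P}$; in particular $\mathbb{k}_S$ is in the essential image of $\mathrm{Lan}_\psi$.
   Context: Fix a field $\mathbb{k}$. Upper semilattices have joins of finite nonempty subsets; $\psi$ full means $\psi(q)\le\psi(q')\Rightarrow q\le q'$; upper semilattice morphisms preserve such joins. $\uparrow X=\{p:\exists x\in X,x\le p\}$; $\operatorname{cover}X=\min(\uparrow X\setminus X)$. A spread is a nonempty convex zigzag-connected subset; $\mathbb{k}_S$ is the indicator representation of a convex set $S$. $\lfloor p\rfloor_\psi=\bigvee\{q\in\mathcal{Q}:\psi(q)\le p\}$ and $\lfloor S\rfloor_\psi=\{\lfloor s\rfloor_\psi: s\in S\}$. $\mathrm{Lan}_\psi:\operatorname{rep}\mathcal{Q}\to\operatorname{rep}\mathcal{P}$ is the left adjoint of restriction along $\psi$, given by $N\mapsto N\circ\lfloor-\rfloor_\psi$; $\operatorname{rep}$ of a finite poset is the category of functors to finite-dimensional vector spaces. *)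

theory Defs
  imports "Jordan_Normal_Form.Matrix"
begin

text \<open>Finite posets that are upper semilattices are modelled as finite types of class
semilattice_sup (binary joins, hence joins of all finite nonempty subsets).\<close>

definition up_set :: "'p::order set \<Rightarrow> 'p set" where
  "up_set X = {p. \<exists>x\<in>X. x \<le> p}"

definition min_set :: "'p::order set \<Rightarrow> 'p set" where
  "min_set X = {x\<in>X. \<not> (\<exists>y\<in>X. y < x)}"

definition cover_set :: "'p::order set \<Rightarrow> 'p set" where
  "cover_set X = min_set (up_set X - X)"

definition convex_set :: "'p::order set \<Rightarrow> bool" where
  "convex_set S \<longleftrightarrow> (\<forall>a\<in>S. \<forall>c\<in>S. \<forall>b. a \<le> b \<and> b \<le> c \<longrightarrow> b \<in> S)"

definition zigzag_connected :: "'p::order set \<Rightarrow> bool" where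
  "zigzag_connected S \<longleftrightarrow>
     (\<forall>a\<in>S. \<forall>b\<in>S. (\<lambda>x y. x \<in> S \<and> y \<in> S \<and> (x \<le> y \<or> y \<le> x))\<^sup>*\<^sup>* a b)"

definition spread :: "'p::order set \<Rightarrow> bool" where
  "spread S \<longleftrightarrow> S \<noteq> {} \<and> convex_set S \<and> zigzag_connected S"

definition full_map :: "('q::order \<Rightarrow> 'p::order) \<Rightarrow> bool" where
  "full_map \<psi> \<longleftrightarrow> (\<forall>q q'. \<psi> q \<le> \<psi> q' \<longrightarrow> q \<le> q')"

definition usl_morphism :: "('q::semilattice_sup \<Rightarrow> 'p::semilattice_sup) \<Rightarrow> bool" where
  "usl_morphism \<psi> \<longleftrightarrow> (\<forall>A. finite A \<and> A \<noteq> {} \<longrightarrow> \<psi> (Sup_fin A) = Sup_fin (\<psi> ` A))"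

definition floor_psi :: "('q::semilattice_sup \<Rightarrow> 'p::order) \<Rightarrow> 'p \<Rightarrow> 'q" where
  "floor_psi \<psi> p = Sup_fin {q. \<psi> q \<le> p}"

text \<open>A representation of a poset over a field: a dimension at each point and, for
each comparable pair p \<le> q, a (dim q) x (dim p) matrix, functorially.\<close>

type_synonym ('p, 'k) rep = "('p \<Rightarrow> nat) \<times> ('p \<Rightarrow> 'p \<Rightarrow> 'k mat)"

definition is_rep :: "('p::order, 'k::field) rep \<Rightarrow> bool" where
  "is_rep V \<longleftrightarrow> (case V of (d, M) \<Rightarrow>
     (\<forall>p q. p \<le> q \<longrightarrow> M p q \<in> carrier_mat (d q) (d p)) \<and>
     (\<forall>p. M p p = 1\<^sub>m (d p)) \<and>
     (\<forall>p q r. p \<le> q \<longrightarrow> q \<le> r \<longrightarrow> M p r = M q r * M p q))"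

definition rep_iso :: "('p::order, 'k::field) rep \<Rightarrow> ('p, 'k) rep \<Rightarrow> bool" where
  "rep_iso V W \<longleftrightarrow> is_rep V \<and> is_rep W \<and>
     (\<exists>\<phi>. \<forall>p. \<phi> p \<in> carrier_mat (fst W p) (fst V p) \<and> invertible_mat (\<phi> p) \<and>
        (\<forall>q. p \<le> q \<longrightarrow> \<phi> q * snd V p q = snd W p q * \<phi> p))"

definition indicator_rep :: "'p::order set \<Rightarrow> ('p, 'k::field) rep" where
  "indicator_rep S = ((\<lambda>p. if p \<in> S then 1 else 0),
     (\<lambda>p q. if p \<in> S \<and> q \<in> S then 1\<^sub>m 1
            else 0\<^sub>m (if q \<in> S then 1 else 0) (if p \<in> S then 1 else 0)))"

definition Lan :: "('q::semilattice_sup \<Rightarrow> 'p::order) \<Rightarrow> ('q, 'k) rep \<Rightarrow> ('p, 'k) rep" where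
  "Lan \<psi> N = ((\<lambda>p. fst N (floor_psi \<psi> p)),
               (\<lambda>p q. snd N (floor_psi \<psi> p) (floor_psi \<psi> q)))"

end

theory Submission
  imports Defs
begin

text \<open>The floor map is right adjoint to \<open>\<psi>\<close>: \<open>\<psi> q \<le> p \<longleftrightarrow> q \<le> \<lfloor>p\<rfloor>\<close>. Hence two points
with the same floor lie above exactly the same elements of \<open>\<psi>(Q)\<close>. If \<open>s \<in> S\<close> and
\<open>\<lfloor>p\<rfloor> = \<lfloor>s\<rfloor>\<close>, then \<open>p\<close> lies above a minimal element of \<open>S\<close> below \<open>s\<close>, and if
\<open>p \<notin> S\<close> also above a cover element of \<open>S\<close>, which would then lie below \<open>s\<close>,
contradicting convexity. So \<open>S\<close> is the full preimage of \<open>\<lfloor>S\<rfloor>\<close> under the floor map,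
and \<open>Lan\<^sub>\<psi> \<bbbk>\<^bsub>\<lfloor>S\<rfloor>\<^esub> = \<bbbk>\<^bsub>\<lfloor>S\<rfloor>\<^esub> \<circ> \<lfloor>-\<rfloor>\<close> is literally \<open>\<bbbk>\<^sub>S\<close>.\<close>

lemma min_set_below:
  fixes A :: "'a::order set"
  assumes "finite A" "p \<in> A"
  shows "\<exists>m\<in>min_set A. m \<le> p"
proof -
  obtain m where "m \<in> A" "m \<le> p" "\<forall>b\<in>A. b \<le> m \<longrightarrow> m = b"
    using finite_has_minimal2[OF assms] by blast
  then show ?thesis
    unfolding min_set_def by (auto simp: less_le)
qed

lemma mat_eq_if_dim_zero:
  assumes "A \<in> carrier_mat r c" "B \<in> carrier_mat r c" "r = 0 \<or> c = 0"
  shows "A = B"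
  using assms by (intro eq_matI) auto

lemma invertible_mat_one: "invertible_mat (1\<^sub>m n :: 'k::semiring_1 mat)"
  unfolding invertible_mat_def inverts_mat_def
  by (intro conjI exI[of _ "1\<^sub>m n"]) auto

lemma rep_iso_refl:
  assumes "is_rep (V :: ('p::order, 'k::field) rep)"
  shows "rep_iso V V"
proof -
  obtain d M where V: "V = (d, M)"
    by (cases V)
  have "M p q \<in> carrier_mat (d q) (d p)" if "p \<le> q" for p q
    using assms that unfolding V is_rep_def prod.case by blast
  then have "1\<^sub>m (d q) * M p q = M p q * 1\<^sub>m (d p)" if "p \<le> q" for p q
    using that by (metis left_mult_one_mat right_mult_one_mat)
  then show ?thesis
    using assms unfolding rep_iso_def V fst_conv snd_conv
    by (intro conjI exI[of _ "\<lambda>p. 1\<^sub>m (d p)"]) (simp_all add: invertible_mat_one)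
qed

lemma is_rep_indicator_rep:
  assumes "convex_set S"
  shows "is_rep (indicator_rep S :: ('p::order, 'k::field) rep)"
proof -
  obtain d M where I: "indicator_rep S = (d, M :: 'p \<Rightarrow> 'p \<Rightarrow> 'k mat)"
    by (cases "indicator_rep S :: ('p, 'k) rep")
  have d: "d p = (if p \<in> S then 1 else 0)" for p
    using I unfolding indicator_rep_def by auto
  have M: "M p q = (if p \<in> S \<and> q \<in> S then 1\<^sub>m 1 else 0\<^sub>m (d q) (d p))" for p q
    using I unfolding indicator_rep_def by auto
  have carrier: "M p q \<in> carrier_mat (d q) (d p)" for p q
    by (simp add: M d)
  have identity: "M p p = 1\<^sub>m (d p)" for p
  proof (cases "p \<in> S")
    case True
    then show ?thesis
      by (simp add: M d)
  next
    case False
    then show ?thesis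
      by (intro mat_eq_if_dim_zero[OF carrier]) (auto simp: d)
  qed
  have composition: "M p r = M q r * M p q" if "p \<le> q" "q \<le> r" for p q r
  proof (cases "p \<in> S \<and> r \<in> S")
    case True
    then have "q \<in> S"
      using assms that unfolding convex_set_def by blast
    with True show ?thesis
      by (simp add: M)
  next
    case False
    then show ?thesis
      by (intro mat_eq_if_dim_zero[OF carrier] mult_carrier_mat[OF carrier carrier])
        (auto simp: d)
  qed
  show ?thesis
    unfolding I is_rep_def using carrier identity composition by blast
qed

lemma Lan_indicator_rep:
  "Lan \<psi> (indicator_rep T) = indicator_rep (floor_psi \<psi> -` T)"
  unfolding Lan_def indicator_rep_def by (simp only: vimage_eq fst_conv snd_conv)

locale full_usl_embedding =
  fixes \<psi> :: "'q::{semilattice_sup,finite} \<Rightarrow> 'p::{semilattice_sup,finite}"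
  assumes usl: "usl_morphism \<psi>"
    and full: "full_map \<psi>"
    and up_range: "up_set (range \<psi>) = UNIV"
begin

lemma psi_mono: "a \<le> b \<Longrightarrow> \<psi> a \<le> \<psi> b"
  using usl[unfolded usl_morphism_def, rule_format, of "{a, b}"]
  by (simp add: le_iff_sup)

lemma psi_floor_psi_le: "\<psi> (floor_psi \<psi> p) \<le> p"
proof -
  let ?A = "{q. \<psi> q \<le> p}"
  have "?A \<noteq> {}"
    using up_range unfolding up_set_def by auto
  then have "\<psi> (Sup_fin ?A) = Sup_fin (\<psi> ` ?A)"
    using usl unfolding usl_morphism_def by auto
  also have "\<dots> \<le> p"
    using \<open>?A \<noteq> {}\<close> by (intro Sup_fin.boundedI) auto
  finally show ?thesis
    unfolding floor_psi_def .
qed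

lemma le_floor_psi_iff: "q \<le> floor_psi \<psi> p \<longleftrightarrow> \<psi> q \<le> p"
proof
  assume "q \<le> floor_psi \<psi> p"
  then show "\<psi> q \<le> p"
    using psi_mono psi_floor_psi_le order_trans by blast
next
  assume "\<psi> q \<le> p"
  then show "q \<le> floor_psi \<psi> p"
    unfolding floor_psi_def by (intro Sup_fin.coboundedI) auto
qed

lemma floor_psi_psi: "floor_psi \<psi> (\<psi> q) = q"
  using le_floor_psi_iff psi_floor_psi_le full unfolding full_map_def
  by (metis order.antisym order.refl)

lemma convex_set_if_convex_vimage_floor_psi:
  assumes "convex_set (floor_psi \<psi> -` T)"
  shows "convex_set T"
  unfolding convex_set_def
proof (intro ballI allI impI)
  fix a b c
  assume "a \<in> T" "c \<in> T" "a \<le> b \<and> b \<le> c"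
  then have "\<psi> a \<in> floor_psi \<psi> -` T" "\<psi> c \<in> floor_psi \<psi> -` T" "\<psi> a \<le> \<psi> b \<and> \<psi> b \<le> \<psi> c"
    using floor_psi_psi psi_mono by auto
  then have "\<psi> b \<in> floor_psi \<psi> -` T"
    using assms unfolding convex_set_def by blast
  then show "b \<in> T"
    using floor_psi_psi by simp
qed

lemma vimage_floor_psi_image:
  assumes convex: "convex_set S"
    and min_range: "min_set S \<subseteq> range \<psi>"
    and cover_range: "cover_set S \<subseteq> range \<psi>"
  shows "floor_psi \<psi> -` floor_psi \<psi> ` S = S"
proof
  show "floor_psi \<psi> -` floor_psi \<psi> ` S \<subseteq> S"
  proof
    fix p
    assume "p \<in> floor_psi \<psi> -` floor_psi \<psi> ` S"
    then obtain s where "s \<in> S" and same_floor: "floor_psi \<psi> p = floor_psi \<psi> s"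
      by auto
    have same_range_below: "x \<le> p \<longleftrightarrow> x \<le> s" if "x \<in> range \<psi>" for x
      using that same_floor le_floor_psi_iff by (metis rangeE)
    obtain m where "m \<in> min_set S" "m \<le> s"
      using min_set_below[OF finite \<open>s \<in> S\<close>] by blast
    then have "p \<in> up_set S"
      using min_range same_range_below unfolding min_set_def up_set_def by blast
    show "p \<in> S"
    proof (rule ccontr)
      assume "p \<notin> S"
      with \<open>p \<in> up_set S\<close> obtain c where c: "c \<in> cover_set S" "c \<le> p"
        using min_set_below[of "up_set S - S" p] unfolding cover_set_def by auto
      then have "c \<le> s" "c \<in> up_set S" "c \<notin> S"
        using cover_range same_range_below unfolding cover_set_def min_set_def by auto
      then show False
        using convex \<open>s \<in> S\<close> unfolding up_set_def convex_set_def by blast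
    qed
  qed
qed blast

end

theorem mainTheorem14:
  fixes \<psi> :: "'q::{semilattice_sup,finite} \<Rightarrow> 'p::{semilattice_sup,finite}"
    and S :: "'p set"
  assumes "usl_morphism \<psi>" and "full_map \<psi>"
    and "up_set (range \<psi>) = UNIV"
    and "spread S"
    and "min_set S \<subseteq> range \<psi>"
    and "cover_set S \<subseteq> range \<psi>"
  shows "rep_iso (indicator_rep S :: ('p, 'k::field) rep)
                 (Lan \<psi> (indicator_rep (floor_psi \<psi> ` S)))
       \<and> (\<exists>N :: ('q, 'k) rep. is_rep N \<and> rep_iso (indicator_rep S) (Lan \<psi> N))"
proof -
  interpret full_usl_embedding \<psi>
    using assms(1-3) by unfold_locales
  have "convex_set S"
    using assms(4) unfolding spread_def by blast
  then have preimage: "floor_psi \<psi> -` floor_psi \<psi> ` S = S"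
    using assms(5,6) by (rule vimage_floor_psi_image)
  have iso: "rep_iso (indicator_rep S :: ('p, 'k) rep) (Lan \<psi> (indicator_rep (floor_psi \<psi> ` S)))"
    unfolding Lan_indicator_rep preimage
    using \<open>convex_set S\<close> by (intro rep_iso_refl is_rep_indicator_rep)
  have "is_rep (indicator_rep (floor_psi \<psi> ` S) :: ('q, 'k) rep)"
    using \<open>convex_set S\<close> preimage by (intro is_rep_indicator_rep convex_set_if_convex_vimage_floor_psi) simp
  with iso show ?thesis
    by blast
qed

end
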